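(* Let $v,a,b,c\in\mathbb{C}$ with $\Re(v)<4$, $\Re(c)>0$, and $\Re(vc+a+b)>0$, $\Re(vc+a-b)>0$, $\Re(vc-a+b)>0$, $\Re(vc-a-b)>0$. Put $\sigma_3=\frac v2-\frac{a}{2c}-\frac{b}{2c}$, $\sigma_4=\frac v2-\frac{a}{2c}+\frac{b}{2c}$, $\sigma_5=\frac v2+\frac{a}{2c}+\frac{b}{2c}$, $\sigma_6=\frac v2+\frac{a}{2c}-\frac{b}{2c}$, $P=(vc-a-b)(vc+a+b)(vc-a+b)(vc+a-b)$, and assume $\frac v2\notin\mathbb{Z}_0^-$, $1+\sigma_j\notin\mathbb{Z}_0^-$ ($j=3,4,5,6$). Then $$ \int_0^\infty\frac{\sinh(ax)\sinh(bx)}{\cosh^{v}(cx)}\,dx=\frac{2^{v+1}\,v\,a\,b\,c}{P}\;{}_6F_5\!\left(\begin{matrix}v,\ 1+\frac v2,\ \sigma_3,\ \sigma_5,\ \sigma_4,\ \sigma_6\\ \frac v2,\ 1+\sigma_3,\ 1+\sigma_5,\ 1+\sigma_4,\ 1+\sigma_6\end{matrix};\,-1\right). $$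
   Context: $\mathbb{Z}_0^-=\{0,-1,-2,\dots\}$. The Pochhammer symbol is $(\lambda)_0=1$, $(\lambda)_n=\lambda(\lambda+1)\cdots(\lambda+n-1)$ for $n\ge1$. The generalized hypergeometric series is ${}_pF_q\!\left(\begin{matrix}\alpha_1,\dots,\alpha_p\\ \beta_1,\dots,\beta_q\end{matrix};z\right)=\sum_{n=0}^\infty\frac{(\alpha_1)_n\cdots(\alpha_p)_n}{(\beta_1)_n\cdots(\beta_q)_n}\frac{z^n}{n!}$ (with no $\beta_j\in\mathbb{Z}_0^-$); when $p=q+1$ and $z=-1$ it converges if $\Re(\sum\beta_j-\sum\alpha_i)>-1$. For $\Re(c)>0$ and $x>0$, the complex power $\cosh^{v}(cx)$ means $2^{-v}e^{vcx}(1+e^{-2cx})^{v}$, with the principal branch of $(1+e^{-2cx})^{v}$ (this agrees with the ordinary real power when $c>0$ and $v$ is real). *)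

theory Defs
  imports "HOL-Analysis.Analysis"
begin

definition hypergeom_pFq :: "complex list \<Rightarrow> complex list \<Rightarrow> complex \<Rightarrow> complex" where
  "hypergeom_pFq as bs z =
     (\<Sum>n. (\<Prod>a\<leftarrow>as. pochhammer a n) / (\<Prod>b\<leftarrow>bs. pochhammer b n) * z ^ n / of_nat (fact n))"

definition cosh_pow :: "complex \<Rightarrow> complex \<Rightarrow> complex" where
  "cosh_pow v w = 2 powr (-v) * exp (v * w) * (1 + exp (-2 * w)) powr v"

end

theory Submission
  imports Defs "HOL-Real_Asymp.Real_Asymp" "HOL-Library.Landau_Symbols"
begin

text \<open>
  For \<open>x > 0\<close> one has \<open>cosh(cx)^(-v) = 2^v e^(-vcx) (1 + e^(-2cx))^(-v)\<close>. Expanding the last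
  factor as a binomial series and integrating term by term gives \<open>2^v \<Sum>k (-v choose k) L((v + 2k)c)\<close>,
  where \<open>L(u) = 2abu / ((u-a-b)(u+a+b)(u-a+b)(u+a-b))\<close> is the Laplace transform of
  \<open>sinh(ax) sinh(bx)\<close>. The ratio \<open>L((v + 2k)c) / L(vc)\<close> factors into the Pochhammer quotients
  \<open>(1 + v/2)\<^sub>k / (v/2)\<^sub>k\<close> and \<open>(\<sigma>\<^sub>j)\<^sub>k / (1 + \<sigma>\<^sub>j)\<^sub>k\<close>, and \<open>(-v choose k) = (-1)^k (v)\<^sub>k / k!\<close>, so the series
  is \<open>2^v L(vc)\<close> times the very-well-poised \<open>6F5\<close> at \<open>-1\<close>.

  The interchange of sum and integral is the delicate point: \<open>|(-v choose k)| L((v + 2k)c)\<close> decays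
  only like \<open>k^(Re v - 4)\<close>, which is not summable when \<open>Re v \<ge> 3\<close>. Multiplying a partial sum of the
  binomial series by \<open>1 + e^(-2cx)\<close> turns it, by Pascal's rule, into a partial sum of the binomial
  series with exponent \<open>1 - v\<close>, whose coefficients are smaller by a factor of order \<open>k\<close>, plus a single
  remainder term whose integral tends to zero; dominated convergence applies to the former.
\<close>

lemma norm_cosh_le: "norm (cosh (w::complex)) \<le> exp \<bar>Re w\<bar>"
proof -
  have "norm (cosh w) = norm (exp w + exp (-w)) / 2"
    by (simp add: cosh_def norm_divide)
  also have "\<dots> \<le> (norm (exp w) + norm (exp (-w))) / 2"
    by (intro divide_right_mono norm_triangle_ineq) auto
  also have "\<dots> = (exp (Re w) + exp (- Re w)) / 2" by simp
  also have "\<dots> \<le> exp \<bar>Re w\<bar>" by (cases "Re w \<ge> 0") auto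
  finally show ?thesis .
qed

lemma norm_sinh_le: "norm (sinh (z::complex)) \<le> norm z * exp \<bar>Re z\<bar>"
proof -
  have "norm (sinh z - sinh 0) \<le> exp \<bar>Re z\<bar> * norm (z - 0)"
  proof (rule field_differentiable_bound[of "closed_segment 0 z" sinh cosh])
    fix w assume "w \<in> closed_segment 0 z"
    then obtain u where u: "0 \<le> u" "u \<le> 1" "w = u *\<^sub>R z"
      by (auto simp: closed_segment_def)
    have "\<bar>Re w\<bar> \<le> \<bar>Re z\<bar>" using u by (auto simp: abs_mult intro: mult_left_le_one_le)
    then show "norm (cosh w) \<le> exp \<bar>Re z\<bar>"
      using norm_cosh_le[of w] by (meson exp_le_cancel_iff order_trans)
    show "(sinh has_field_derivative cosh w) (at w within closed_segment 0 z)"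
      by (auto intro!: derivative_eq_intros)
  qed auto
  then show ?thesis by (simp add: mult.commute)
qed

lemma norm_one_plus_exp_bounded_below:
  fixes c :: complex
  assumes c: "Re c > 0"
  obtains \<delta> where "\<delta> > 0" "\<And>t::real. t > 0 \<Longrightarrow> \<delta> \<le> norm (1 + exp (- (c * of_real t)))"
proof
  define \<tau> where "\<tau> = pi / (2 * (\<bar>Im c\<bar> + 1))"
  have \<tau>: "\<tau> > 0" by (simp add: \<tau>_def add_pos_nonneg)
  show "1 - exp (- Re c * \<tau>) > 0" using c \<tau> by simp
  fix t :: real assume t: "t > 0"
  define z where "z = - (c * of_real t)"
  show "1 - exp (- Re c * \<tau>) \<le> norm (1 + exp (- (c * of_real t)))"
  proof (cases "cos (Im z) \<ge> 0")
    case True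
    have "1 \<le> Re (1 + exp z)" using True by (simp add: Re_exp)
    also have "\<dots> \<le> norm (1 + exp z)" by (rule complex_Re_le_cmod)
    finally have "1 \<le> norm (1 + exp (- (c * of_real t)))" by (simp add: z_def)
    then show ?thesis by (smt (verit) exp_gt_zero)
  next
    case False
    have "pi / 2 \<le> \<bar>Im z\<bar>"
      using False cos_gt_zero_pi[of "Im z"] by (cases "Im z \<ge> 0") auto
    then have "pi / 2 \<le> (\<bar>Im c\<bar> + 1) * t"
      using t by (simp add: z_def abs_mult algebra_simps)
    then have "\<tau> \<le> t" by (simp add: \<tau>_def field_simps)
    then have "norm (exp z) \<le> exp (- Re c * \<tau>)"
      using c by (simp add: z_def mult_left_mono)
    moreover have "1 - norm (exp z) \<le> norm (1 + exp z)"
      using norm_triangle_ineq2[of 1 "- exp z"] by simp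
    ultimately show ?thesis unfolding z_def by linarith
  qed
qed

lemma has_integral_Ioi_iff_Ici:
  fixes f :: "real \<Rightarrow> 'a::banach"
  shows "(f has_integral y) {a<..} \<longleftrightarrow> (f has_integral y) {a..}"
  by (rule has_integral_spike_set_eq) (auto intro: negligible_subset[of "{a}"])

lemma fundamental_theorem_of_calculus_at_top:
  fixes f F :: "real \<Rightarrow> 'a::euclidean_space" and g :: "real \<Rightarrow> real"
  assumes der: "\<And>x. x \<ge> 0 \<Longrightarrow> (F has_vector_derivative f x) (at x)"
    and lim: "(\<lambda>n. F (real n)) \<longlonglongrightarrow> L"
    and g: "g integrable_on {0..}" and bound: "\<And>x. x \<ge> 0 \<Longrightarrow> norm (f x) \<le> g x"
  shows "(f has_integral (L - F 0)) {0<..}"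
proof -
  define fn where "fn n x = (if x \<in> {0..real n} then f x else 0)" for n x
  have int: "(fn n has_integral (F (real n) - F 0)) {0..}" for n
  proof -
    have "(f has_integral (F (real n) - F 0)) {0..real n}"
      by (rule fundamental_theorem_of_calculus) (simp_all add: has_vector_derivative_at_within der)
    then show ?thesis unfolding fn_def
      using has_integral_restrict[of "{0..real n}" "{0..}" f] by simp
  qed
  have bound_fn: "norm (fn k x) \<le> g x" if "x \<in> {0..}" for k x
    using bound[of x] that by (auto simp: fn_def intro: order_trans[OF norm_ge_zero])
  have "(\<lambda>k. fn k x) \<longlonglongrightarrow> f x" if "x \<in> {0..}" for x
  proof (rule tendsto_eventually)
    obtain N where "x \<le> real N" using real_arch_simple by blast
    then show "\<forall>\<^sub>F k in sequentially. fn k x = f x"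
      using that unfolding eventually_sequentially fn_def by (intro exI[of _ N]) simp
  qed
  note dc = dominated_convergence[of fn "{0..}" g, OF has_integral_integrable[OF int] g bound_fn this]
  have "(\<lambda>n. integral {0..} (fn n)) \<longlonglongrightarrow> L - F 0"
    using tendsto_diff[OF lim tendsto_const[of "F 0"]] integral_unique[OF int] by simp
  then have "integral {0..} f = L - F 0"
    using dc(2) int LIMSEQ_unique by blast
  then have "(f has_integral (L - F 0)) {0..}"
    using dc(1) int integrable_integral by metis
  then show ?thesis by (simp add: has_integral_Ioi_iff_Ici)
qed

lemma has_integral_exp_neg_complex:
  fixes s :: complex
  assumes s: "Re s > 0"
  shows "((\<lambda>x::real. exp (-(s * of_real x))) has_integral 1 / s) {0<..}"
proof -
  have "((\<lambda>x::real. exp (-(s * of_real x))) has_integral (0 - (- exp (-(s * of_real 0)) / s))) {0<..}"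
  proof (rule fundamental_theorem_of_calculus_at_top[where g = "\<lambda>x. exp (- Re s * x)"])
    fix x :: real
    have "((\<lambda>z. - exp (-(s * z)) / s) has_field_derivative exp (-(s * of_real x))) (at (of_real x))"
      using s by (auto intro!: derivative_eq_intros simp: field_simps)
    then show "((\<lambda>x. - exp (-(s * of_real x)) / s) has_vector_derivative exp (-(s * of_real x))) (at x)"
      by (rule has_vector_derivative_real_field)
  next
    have "(\<lambda>n. exp (- Re s * real n)) \<longlonglongrightarrow> 0"
      using s by real_asymp
    then have "(\<lambda>n. exp (- Re s * real n) / norm s) \<longlonglongrightarrow> 0"
      by (rule tendsto_divide_zero)
    then show "(\<lambda>n. - exp (-(s * of_real (real n))) / s) \<longlonglongrightarrow> 0"
      by (subst tendsto_norm_zero_iff[symmetric]) (simp add: norm_divide)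
  qed (use s integrable_on_exp_minus_to_infinity in auto)
  then show ?thesis by simp
qed

lemma has_integral_square_exp_neg:
  fixes l :: real
  assumes l: "l > 0"
  shows "((\<lambda>x::real. x\<^sup>2 * exp (- (l * x))) has_integral 2 / l ^ 3) {0<..}"
proof -
  define F where "F y = - exp (- (l * y)) * (y\<^sup>2 / l + 2 * y / l\<^sup>2 + 2 / l ^ 3)" for y
  have "(F has_real_derivative (y\<^sup>2 * exp (- (l * y)))) (at y)" for y
    unfolding F_def using l
    by (auto intro!: derivative_eq_intros simp: field_simps power2_eq_square eval_nat_numeral)
  then have int: "((\<lambda>x. x\<^sup>2 * exp (- (l * x))) has_integral (F y - F 0)) {0..y}" if "y \<ge> 0" for y
    using that by (intro fundamental_theorem_of_calculus)
      (auto simp: has_real_derivative_iff_has_vector_derivative has_vector_derivative_at_within)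
  have "((\<lambda>x. x\<^sup>2 * exp (- (l * x))) has_integral (0 - F 0)) {0..}"
  proof (rule has_integral_to_inf)
    have "\<forall>\<^sub>F y in at_top. integral {0..y} (\<lambda>x. x\<^sup>2 * exp (- (l * x))) = F y - F 0"
      using eventually_ge_at_top[of "0::real"] by eventually_elim (use int in \<open>simp add: integral_unique\<close>)
    moreover have "((\<lambda>y. F y - F 0) \<longlongrightarrow> 0 - F 0) at_top"
      unfolding F_def using l by real_asymp
    ultimately show "((\<lambda>y. integral {0..y} (\<lambda>x. x\<^sup>2 * exp (- (l * x)))) \<longlongrightarrow> 0 - F 0) at_top"
      by (simp add: filterlim_cong)
  next
    show "(\<lambda>x. x\<^sup>2 * exp (- (l * x))) integrable_on {0..y}" for y
      by (intro integrable_continuous_interval continuous_intros)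
  qed auto
  then show ?thesis using l by (simp add: F_def has_integral_Ioi_iff_Ici)
qed

lemma nonzero_if_Re_pos: "Re z > 0 \<Longrightarrow> (z::complex) \<noteq> 0"
  by auto

definition laplace_sinh_sinh :: "complex \<Rightarrow> complex \<Rightarrow> complex \<Rightarrow> complex" where
  "laplace_sinh_sinh a b u = 2 * a * b * u / ((u - a - b) * (u + a + b) * (u - a + b) * (u + a - b))"

lemma laplace_sinh_sinh_partial_fractions:
  fixes a b u :: complex
  assumes "u - a - b \<noteq> 0" "u + a + b \<noteq> 0" "u - a + b \<noteq> 0" "u + a - b \<noteq> 0"
  shows "(1 / (u - a - b) - 1 / (u - a + b) - 1 / (u + a - b) + 1 / (u + a + b)) / 4
           = laplace_sinh_sinh a b u"
proof -
  define A where "A = (u - a - b) * (u + a + b)"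
  define B where "B = (u - a + b) * (u + a - b)"
  have "A \<noteq> 0" "B \<noteq> 0" using assms by (simp_all add: A_def B_def)
  have "1 / (u - a - b) + 1 / (u + a + b) = 2 * u / A"
    using assms by (simp add: A_def field_simps)
  moreover have "1 / (u - a + b) + 1 / (u + a - b) = 2 * u / B"
    using assms by (simp add: B_def field_simps)
  ultimately have "(1 / (u - a - b) - 1 / (u - a + b) - 1 / (u + a - b) + 1 / (u + a + b)) / 4
      = (2 * u / A - 2 * u / B) / 4"
    by (simp add: algebra_simps)
  also have "\<dots> = u * (B - A) / (2 * (A * B))"
    using \<open>A \<noteq> 0\<close> \<open>B \<noteq> 0\<close> by (simp add: field_simps)
  also have "B - A = 4 * a * b" by (simp add: A_def B_def algebra_simps)
  also have "u * (4 * a * b) / (2 * (A * B)) = 2 * a * b * u / (A * B)"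
    by (simp add: field_simps)
  also have "A * B = (u - a - b) * (u + a + b) * (u - a + b) * (u + a - b)"
    by (simp add: A_def B_def mult_ac)
  finally show ?thesis unfolding laplace_sinh_sinh_def .
qed

lemma has_integral_sinh_sinh_exp:
  fixes a b u :: complex
  assumes "Re (u - a - b) > 0" "Re (u + a + b) > 0" "Re (u - a + b) > 0" "Re (u + a - b) > 0"
  shows "((\<lambda>x::real. sinh (a * of_real x) * sinh (b * of_real x) * exp (- (u * of_real x)))
           has_integral laplace_sinh_sinh a b u) {0<..}"
proof -
  have eq: "sinh (a * of_real x) * sinh (b * of_real x) * exp (- (u * of_real x)) =
     (exp (- ((u - a - b) * of_real x)) - exp (- ((u - a + b) * of_real x))
      - exp (- ((u + a - b) * of_real x)) + exp (- ((u + a + b) * of_real x))) / 4" for x :: real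
    by (simp add: sinh_def scaleR_conv_of_real field_simps flip: exp_add exp_diff)
  show ?thesis
    unfolding eq laplace_sinh_sinh_partial_fractions[OF assms[THEN nonzero_if_Re_pos], symmetric]
    using assms
    by (intro has_integral_divide has_integral_add has_integral_diff has_integral_exp_neg_complex)
qed

lemma Re_shifted_points_pos:
  fixes v a b c :: complex and n :: nat
  assumes c: "Re c > 0"
    and pos: "Re (v * c + a + b) > 0" "Re (v * c + a - b) > 0"
      "Re (v * c - a + b) > 0" "Re (v * c - a - b) > 0"
  defines "u \<equiv> (v + 2 * of_nat n) * c"
  shows "Re (u - a - b) > 0" "Re (u + a + b) > 0" "Re (u - a + b) > 0" "Re (u + a - b) > 0"
proof -
  have "Re (u - a - b) = Re (v * c - a - b) + 2 * real n * Re c"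
    "Re (u + a + b) = Re (v * c + a + b) + 2 * real n * Re c"
    "Re (u - a + b) = Re (v * c - a + b) + 2 * real n * Re c"
    "Re (u + a - b) = Re (v * c + a - b) + 2 * real n * Re c"
    by (simp_all add: u_def algebra_simps)
  moreover have "0 \<le> 2 * real n * Re c" using c by simp
  ultimately show "Re (u - a - b) > 0" "Re (u + a + b) > 0" "Re (u - a + b) > 0" "Re (u + a - b) > 0"
    using pos by linarith+
qed

lemma norm_gchoose_bigo:
  fixes z :: complex
  shows "(\<lambda>n. norm (z gchoose n)) \<in> O(\<lambda>n. real n powr (- Re z - 1))"
proof -
  have "(\<lambda>n. z gchoose n) \<in> O(\<lambda>n. (-1) ^ n / exp ((z + 1) * of_real (ln (real n))))"
    by (rule bigoI_tendsto[OF gbinomial_asymptotic]) auto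
  also have "(\<lambda>n. (-1) ^ n / exp ((z + 1) * of_real (ln (real n))))
      \<in> O(\<lambda>n. of_real (real n powr (- Re z - 1)))"
  proof (rule bigoI[where c = 1], rule eventually_mono[OF eventually_gt_at_top[of 0]])
    fix n :: nat assume "n > 0"
    then have "norm (exp ((z + 1) * of_real (ln (real n)))) = real n powr (Re z + 1)"
      by (simp add: powr_def)
    then show "norm ((-1) ^ n / exp ((z + 1) * of_real (ln (real n))))
        \<le> 1 * norm (complex_of_real (real n powr (- Re z - 1)))"
      by (simp add: norm_divide norm_power powr_minus_divide[symmetric])
  qed
  finally have "(\<lambda>n. norm (z gchoose n)) \<in> O(\<lambda>n. norm (complex_of_real (real n powr (- Re z - 1))))"
    by (simp only: landau_o.big.norm_iff)
  then show ?thesis by simp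
qed

lemma norm_gchoose_div_cube_bigo:
  fixes z :: complex and \<alpha> \<beta> :: real
  assumes "\<alpha> > 0" "\<beta> > 0"
  shows "(\<lambda>n. norm (z gchoose n) / (\<alpha> + \<beta> * real n) ^ 3) \<in> O(\<lambda>n. real n powr (- Re z - 4))"
proof -
  have "(\<lambda>n. 1 / (\<alpha> + \<beta> * real n) ^ 3) \<in> O(\<lambda>n. real n powr (-3))"
    using assms by real_asymp
  from landau_o.big.mult[OF norm_gchoose_bigo this]
  show ?thesis by (simp add: powr_add[symmetric] algebra_simps)
qed

lemma summable_norm_gchoose_div_cube:
  fixes z :: complex and \<alpha> \<beta> :: real
  assumes "\<alpha> > 0" "\<beta> > 0" "Re z > -3"
  shows "summable (\<lambda>n. norm (z gchoose n) / (\<alpha> + \<beta> * real n) ^ 3)"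
proof (rule summable_comparison_test_bigo)
  show "summable (\<lambda>n. norm (real n powr (- Re z - 4)))"
    using assms(3) by (simp add: summable_real_powr_iff)
qed (rule norm_gchoose_div_cube_bigo[OF assms(1,2)])

lemma norm_gchoose_div_cube_tendsto_zero:
  fixes z :: complex and \<alpha> \<beta> :: real
  assumes "\<alpha> > 0" "\<beta> > 0" "Re z > -4"
  shows "(\<lambda>n. norm (z gchoose n) / (\<alpha> + \<beta> * real n) ^ 3) \<longlonglongrightarrow> 0"
proof -
  have "(\<lambda>n. real n powr (- Re z - 4)) \<in> o(\<lambda>_. 1)"
    using assms(3) by real_asymp
  from landau_o.big_small_trans[OF norm_gchoose_div_cube_bigo[OF assms(1,2)] this]
  show ?thesis by (auto dest: smalloD_tendsto)
qed

lemma gbinomial_partial_sum_pascal: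
  fixes w q :: "'a::field_char_0"
  shows "(1 + q) * (\<Sum>k\<le>N. (w gchoose k) * q ^ k)
           = (\<Sum>k\<le>N. ((w + 1) gchoose k) * q ^ k) + (w gchoose N) * q ^ Suc N"
proof (induction N)
  case (Suc N)
  have "((w + 1) gchoose Suc N) = (w gchoose N) + (w gchoose Suc N)"
    using gbinomial_Suc_Suc[of w N] by simp
  with Suc.IH show ?case by (simp add: algebra_simps)
qed simp

lemma has_integral_suminf_nonneg:
  fixes G :: "nat \<Rightarrow> 'n::euclidean_space \<Rightarrow> real"
  assumes has_integral: "\<And>k. (G k has_integral \<gamma> k) S"
    and nonneg: "\<And>k x. x \<in> S \<Longrightarrow> 0 \<le> G k x"
    and summable_G: "\<And>x. x \<in> S \<Longrightarrow> summable (\<lambda>k. G k x)"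
    and summable_\<gamma>: "summable \<gamma>"
  shows "((\<lambda>x. \<Sum>k. G k x) has_integral (\<Sum>k. \<gamma> k)) S"
proof -
  have partial: "((\<lambda>x. \<Sum>k<N. G k x) has_integral (\<Sum>k<N. \<gamma> k)) S" for N
    by (intro has_integral_sum has_integral) simp
  have \<gamma>_nonneg: "0 \<le> \<gamma> k" for k
    by (rule has_integral_nonneg[OF has_integral nonneg])
  have "(\<lambda>x. \<Sum>k. G k x) integrable_on S \<and>
      (\<lambda>N. integral S (\<lambda>x. \<Sum>k<N. G k x)) \<longlonglongrightarrow> integral S (\<lambda>x. \<Sum>k. G k x)"
  proof (rule monotone_convergence_increasing)
    show "bounded (range (\<lambda>N. integral S (\<lambda>x. \<Sum>k<N. G k x)))"
    proof (rule boundedI)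
      fix y assume "y \<in> range (\<lambda>N. integral S (\<lambda>x. \<Sum>k<N. G k x))"
      then obtain N where "y = (\<Sum>k<N. \<gamma> k)"
        using partial integral_unique by blast
      then show "norm y \<le> (\<Sum>k. \<gamma> k)"
        using \<gamma>_nonneg by (simp add: sum_nonneg sum_le_suminf summable_\<gamma>)
    qed
  next
    show "(\<lambda>x. \<Sum>k<N. G k x) integrable_on S" for N
      using partial by blast
    show "(\<Sum>k<N. G k x) \<le> (\<Sum>k<Suc N. G k x)" if "x \<in> S" for N x
      using nonneg[OF that] by simp
    show "(\<lambda>N. \<Sum>k<N. G k x) \<longlonglongrightarrow> (\<Sum>k. G k x)" if "x \<in> S" for x
      using summable_LIMSEQ[OF summable_G[OF that]] .
  qed
  moreover have "(\<lambda>N. integral S (\<lambda>x. \<Sum>k<N. G k x)) \<longlonglongrightarrow> (\<Sum>k. \<gamma> k)"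
    using summable_LIMSEQ[OF summable_\<gamma>] integral_unique[OF partial] by simp
  ultimately show ?thesis
    using LIMSEQ_unique has_integral_integral by metis
qed

lemma continuous_dominated_integrable:
  fixes f :: "real \<Rightarrow> complex"
  assumes "S \<in> sets lebesgue" "continuous_on S f" "g integrable_on S"
    "\<And>x. x \<in> S \<Longrightarrow> norm (f x) \<le> g x"
  shows "f integrable_on S"
  using measurable_bounded_by_integrable_imp_integrable
      [OF continuous_imp_measurable_on_sets_lebesgue[OF assms(2,1)] assms(3,4,1)] .

locale binomial_series_integrand =
  fixes S :: "real set" and h q :: "real \<Rightarrow> complex" and w :: complex
    and G :: "nat \<Rightarrow> real \<Rightarrow> real" and \<gamma> :: "nat \<Rightarrow> real" and \<delta> :: real
  assumes lebesgue_S: "S \<in> sets lebesgue"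
    and continuous_h: "continuous_on S h" and continuous_q: "continuous_on S q"
    and norm_q_less_one: "\<And>x. x \<in> S \<Longrightarrow> norm (q x) < 1"
    and \<delta>_pos: "\<delta> > 0" and norm_one_plus_q_ge: "\<And>x. x \<in> S \<Longrightarrow> \<delta> \<le> norm (1 + q x)"
    and G_dominates: "\<And>k x. x \<in> S \<Longrightarrow> norm (h x) * norm (q x) ^ k \<le> G k x"
    and has_integral_G: "\<And>k. (G k has_integral \<gamma> k) S"
    and summable_G: "\<And>x. x \<in> S \<Longrightarrow> summable (\<lambda>k. norm ((w + 1) gchoose k) * G k x)"
    and summable_\<gamma>: "summable (\<lambda>k. norm ((w + 1) gchoose k) * \<gamma> k)"
    and tendsto_\<gamma>: "(\<lambda>N. norm (w gchoose N) * \<gamma> (Suc N)) \<longlonglongrightarrow> 0"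
begin

lemma one_plus_q_nonzero: "x \<in> S \<Longrightarrow> 1 + q x \<noteq> 0"
  using norm_one_plus_q_ge[of x] \<delta>_pos by auto

lemma continuous_h_div_one_plus_q: "continuous_on S (\<lambda>x. h x / (1 + q x))"
  using one_plus_q_nonzero by (intro continuous_intros continuous_h continuous_q) auto

lemma norm_h_div_one_plus_q_le:
  assumes "x \<in> S"
  shows "norm (h x / (1 + q x)) \<le> norm (h x) / \<delta>"
  unfolding norm_divide using norm_one_plus_q_ge[OF assms] \<delta>_pos
  by (intro divide_left_mono) (auto intro!: mult_pos_pos)

lemma integrable_term: "(\<lambda>x. h x * q x ^ k) integrable_on S"
  using lebesgue_S has_integral_G G_dominates
  by (intro continuous_dominated_integrable[where g = "G k"] continuous_intros continuous_h continuous_q)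
     (auto simp: norm_mult norm_power)

lemma integrable_dominating_series:
  "(\<lambda>x. (\<Sum>k. norm ((w + 1) gchoose k) * G k x) / \<delta>) integrable_on S"
proof -
  have "0 \<le> G k x" if "x \<in> S" for k x
    using G_dominates[OF that, of k] by (smt (verit) mult_nonneg_nonneg norm_ge_zero zero_le_power)
  then have "((\<lambda>x. \<Sum>k. norm ((w + 1) gchoose k) * G k x) has_integral
      (\<Sum>k. norm ((w + 1) gchoose k) * \<gamma> k)) S"
    by (intro has_integral_suminf_nonneg has_integral_mult_right has_integral_G summable_G summable_\<gamma>) auto
  then show ?thesis
    by (intro integrable_on_divide) blast
qed

definition partial_sum :: "nat \<Rightarrow> real \<Rightarrow> complex" where
  "partial_sum N x = h x / (1 + q x) * (\<Sum>k<N. ((w + 1) gchoose k) * q x ^ k)"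

definition remainder :: "nat \<Rightarrow> real \<Rightarrow> complex" where
  "remainder N x = h x / (1 + q x) * ((w gchoose N) * q x ^ Suc N)"

lemma sum_terms_eq_partial_sum_plus_remainder:
  assumes "x \<in> S"
  shows "(\<Sum>k\<le>N. (w gchoose k) * (h x * q x ^ k)) = partial_sum (Suc N) x + remainder N x"
proof -
  have "(\<Sum>k\<le>N. (w gchoose k) * (h x * q x ^ k)) = h x * (\<Sum>k\<le>N. (w gchoose k) * q x ^ k)"
    by (simp add: sum_distrib_left mult_ac)
  also have "\<dots> = h x / (1 + q x) * ((1 + q x) * (\<Sum>k\<le>N. (w gchoose k) * q x ^ k))"
    using one_plus_q_nonzero[OF assms] by simp
  also have "\<dots> = partial_sum (Suc N) x + remainder N x"
    unfolding gbinomial_partial_sum_pascal partial_sum_def remainder_def lessThan_Suc_atMost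
    by (simp add: distrib_left)
  finally show ?thesis .
qed

lemma norm_partial_sum_le:
  assumes x: "x \<in> S"
  shows "norm (partial_sum N x) \<le> (\<Sum>k. norm ((w + 1) gchoose k) * G k x) / \<delta>"
proof -
  have "norm (partial_sum N x)
      \<le> norm (h x) / \<delta> * (\<Sum>k<N. norm ((w + 1) gchoose k) * norm (q x) ^ k)"
    unfolding partial_sum_def norm_mult using norm_h_div_one_plus_q_le[OF x] \<delta>_pos
    by (intro mult_mono order_trans[OF norm_sum] sum_mono) (auto simp: norm_mult norm_power)
  also have "\<dots> = (\<Sum>k<N. norm ((w + 1) gchoose k) * (norm (h x) * norm (q x) ^ k)) / \<delta>"
    by (simp add: sum_distrib_left sum_divide_distrib algebra_simps)
  also have "\<dots> \<le> (\<Sum>k<N. norm ((w + 1) gchoose k) * G k x) / \<delta>"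
    using \<delta>_pos G_dominates[OF x] by (intro divide_right_mono sum_mono mult_left_mono) auto
  also have "\<dots> \<le> (\<Sum>k. norm ((w + 1) gchoose k) * G k x) / \<delta>"
    using \<delta>_pos G_dominates[OF x] summable_G[OF x]
    by (intro divide_right_mono sum_le_suminf)
       (auto intro!: mult_nonneg_nonneg order_trans[OF _ G_dominates[OF x]])
  finally show ?thesis .
qed

lemma partial_sum_tendsto:
  assumes x: "x \<in> S"
  shows "(\<lambda>N. partial_sum N x) \<longlonglongrightarrow> h x * (1 + q x) powr w"
proof -
  have "(\<lambda>N. partial_sum N x) \<longlonglongrightarrow> h x / (1 + q x) * (1 + q x) powr (w + 1)"
    using gen_binomial_complex[OF norm_q_less_one[OF x]] unfolding partial_sum_def
    by (intro tendsto_mult_left) (simp add: sums_def)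
  also have "h x / (1 + q x) * (1 + q x) powr (w + 1) = h x * (1 + q x) powr w"
    using one_plus_q_nonzero[OF x] by (simp add: powr_add)
  finally show ?thesis .
qed

lemma integrable_partial_sum: "partial_sum N integrable_on S"
  unfolding partial_sum_def using lebesgue_S integrable_dominating_series norm_partial_sum_le[unfolded partial_sum_def]
  by (intro continuous_dominated_integrable continuous_intros continuous_h_div_one_plus_q continuous_q)

theorem integrable_binomial_series: "(\<lambda>x. h x * (1 + q x) powr w) integrable_on S"
  and integral_partial_sum_tendsto:
    "(\<lambda>N. integral S (partial_sum N)) \<longlonglongrightarrow> integral S (\<lambda>x. h x * (1 + q x) powr w)"
  using dominated_convergence[OF integrable_partial_sum integrable_dominating_series
      norm_partial_sum_le partial_sum_tendsto] by blast+

lemma norm_remainder_le: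
  assumes x: "x \<in> S"
  shows "norm (remainder N x) \<le> norm (w gchoose N) * G (Suc N) x / \<delta>"
proof -
  have "norm (remainder N x) \<le> norm (h x) / \<delta> * (norm (w gchoose N) * norm (q x) ^ Suc N)"
    unfolding remainder_def norm_mult norm_power using norm_h_div_one_plus_q_le[OF x]
    by (intro mult_right_mono) auto
  also have "\<dots> = norm (w gchoose N) * (norm (h x) * norm (q x) ^ Suc N) / \<delta>"
    by simp
  also have "\<dots> \<le> norm (w gchoose N) * G (Suc N) x / \<delta>"
    using \<delta>_pos by (intro divide_right_mono mult_left_mono G_dominates x) auto
  finally show ?thesis .
qed

lemma integrable_remainder: "remainder N integrable_on S"
  unfolding remainder_def using lebesgue_S has_integral_G norm_remainder_le[unfolded remainder_def]
  by (intro continuous_dominated_integrable[where g = "\<lambda>x. norm (w gchoose N) * G (Suc N) x / \<delta>"]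
      continuous_intros continuous_h_div_one_plus_q continuous_q integrable_on_divide
      integrable_on_mult_right) auto

lemma integral_remainder_tendsto_zero: "(\<lambda>N. integral S (remainder N)) \<longlonglongrightarrow> 0"
proof -
  have bound: "((\<lambda>x. norm (w gchoose N) * G (Suc N) x / \<delta>) has_integral
      norm (w gchoose N) * \<gamma> (Suc N) / \<delta>) S" for N
    by (intro has_integral_divide has_integral_mult_right has_integral_G)
  from integral_norm_bound_integral[OF integrable_remainder has_integral_integrable[OF bound]
      norm_remainder_le]
  have "norm (integral S (remainder N)) \<le> norm (w gchoose N) * \<gamma> (Suc N) / \<delta>" for N
    unfolding integral_unique[OF bound] .
  then show ?thesis
    by (intro Lim_null_comparison[OF always_eventually tendsto_divide_zero[OF tendsto_\<gamma>]]) auto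
qed

lemma sum_integral_terms_eq:
  "(\<Sum>k\<le>N. (w gchoose k) * integral S (\<lambda>x. h x * q x ^ k))
     = integral S (partial_sum (Suc N)) + integral S (remainder N)"
proof -
  have "(\<Sum>k\<le>N. (w gchoose k) * integral S (\<lambda>x. h x * q x ^ k))
      = integral S (\<lambda>x. \<Sum>k\<le>N. (w gchoose k) * (h x * q x ^ k))"
    by (subst integral_sum) (auto intro: integrable_on_mult_right integrable_term)
  also have "\<dots> = integral S (\<lambda>x. partial_sum (Suc N) x + remainder N x)"
    by (intro integral_cong sum_terms_eq_partial_sum_plus_remainder)
  also have "\<dots> = integral S (partial_sum (Suc N)) + integral S (remainder N)"
    by (intro integral_add integrable_partial_sum integrable_remainder)
  finally show ?thesis .
qed

theorem sums_integral_binomial_series: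
  "(\<lambda>k. (w gchoose k) * integral S (\<lambda>x. h x * q x ^ k))
     sums integral S (\<lambda>x. h x * (1 + q x) powr w)"
proof -
  have "(\<lambda>N. integral S (partial_sum (Suc N)) + integral S (remainder N))
      \<longlonglongrightarrow> integral S (\<lambda>x. h x * (1 + q x) powr w) + 0"
    by (intro tendsto_add integral_remainder_tendsto_zero LIMSEQ_Suc integral_partial_sum_tendsto)
  then show ?thesis
    unfolding sums_def_le sum_integral_terms_eq by simp
qed

end

lemma norm_sinh_sinh_exp_le:
  fixes a b u :: complex and x :: real
  assumes x: "x \<ge> 0"
  shows "norm (sinh (a * of_real x) * sinh (b * of_real x) * exp (- (u * of_real x)))
           \<le> norm a * norm b * (x\<^sup>2 * exp (- ((Re u - \<bar>Re a\<bar> - \<bar>Re b\<bar>) * x)))"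
proof -
  have "norm (sinh (a * of_real x)) \<le> norm a * x * exp (\<bar>Re a\<bar> * x)"
    using norm_sinh_le[of "a * of_real x"] x by (simp add: norm_mult abs_mult)
  moreover have "norm (sinh (b * of_real x)) \<le> norm b * x * exp (\<bar>Re b\<bar> * x)"
    using norm_sinh_le[of "b * of_real x"] x by (simp add: norm_mult abs_mult)
  ultimately have "norm (sinh (a * of_real x) * sinh (b * of_real x) * exp (- (u * of_real x)))
      \<le> norm a * x * exp (\<bar>Re a\<bar> * x) * (norm b * x * exp (\<bar>Re b\<bar> * x)) * exp (- (Re u * x))"
    unfolding norm_mult using x by (intro mult_right_mono mult_mono) auto
  also have "\<dots> = norm a * norm b * (x\<^sup>2 * exp (- ((Re u - \<bar>Re a\<bar> - \<bar>Re b\<bar>) * x)))"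
    by (simp add: power2_eq_square algebra_simps flip: exp_add)
  finally show ?thesis .
qed

lemma summable_norm_gchoose_mult_power:
  fixes z :: complex and r :: real
  assumes "0 \<le> r" "r < 1"
  shows "summable (\<lambda>k. norm (z gchoose k) * r ^ k)"
proof -
  have "ereal (norm (complex_of_real r)) < conv_radius (\<lambda>k. z gchoose k)"
    using assms by (simp add: conv_radius_gchoose)
  from abs_summable_in_conv_radius[OF this] show ?thesis
    using assms by (simp add: norm_mult norm_power)
qed

lemma inverse_cosh_pow:
  "inverse (cosh_pow v w) = 2 powr v * exp (- (v * w)) * (1 + exp (- 2 * w)) powr (- v)"
  by (simp add: cosh_pow_def powr_minus exp_minus mult_ac)

lemma sinh_sinh_binomial_series_integrand:
  fixes v a b c :: complex
  assumes v: "Re v < 4" and c: "Re c > 0"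
    and pos: "Re (v * c + a + b) > 0" "Re (v * c + a - b) > 0"
      "Re (v * c - a + b) > 0" "Re (v * c - a - b) > 0"
  defines "h \<equiv> \<lambda>x::real. sinh (a * of_real x) * sinh (b * of_real x) * exp (- (v * c * of_real x))"
    and "q \<equiv> \<lambda>x::real. exp (- (2 * c * of_real x))"
    and "lam \<equiv> \<lambda>k::nat. Re (v * c) - \<bar>Re a\<bar> - \<bar>Re b\<bar> + 2 * Re c * real k"
  obtains \<delta> where "binomial_series_integrand {0<..} h q (-v)
    (\<lambda>k x. norm a * norm b * (x\<^sup>2 * exp (- (lam k * x)))) (\<lambda>k. norm a * norm b * (2 / lam k ^ 3)) \<delta>"
proof -
  define \<alpha> where "\<alpha> = Re (v * c) - \<bar>Re a\<bar> - \<bar>Re b\<bar>"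
  have \<alpha>: "\<alpha> > 0"
    using pos unfolding \<alpha>_def by (simp add: abs_if)
  have lam_eq: "lam k = \<alpha> + 2 * Re c * real k" for k
    by (simp add: lam_def \<alpha>_def)
  have lam: "lam k > 0" for k
    using \<alpha> c by (simp add: lam_eq add_pos_nonneg)
  obtain \<delta> where \<delta>: "\<delta> > 0" "\<And>x::real. x > 0 \<Longrightarrow> \<delta> \<le> norm (1 + q x)"
    using norm_one_plus_exp_bounded_below[of "2 * c"] c unfolding q_def by auto
  have "binomial_series_integrand {0<..} h q (-v)
    (\<lambda>k x. norm a * norm b * (x\<^sup>2 * exp (- (lam k * x)))) (\<lambda>k. norm a * norm b * (2 / lam k ^ 3)) \<delta>"
  proof
    show "norm (h x) * norm (q x) ^ k \<le> norm a * norm b * (x\<^sup>2 * exp (- (lam k * x)))"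
      if "x \<in> {0<..}" for k x
    proof -
      have "h x * q x ^ k = sinh (a * of_real x) * sinh (b * of_real x)
          * exp (- ((v + 2 * of_nat k) * c * of_real x))"
        by (simp add: h_def q_def algebra_simps flip: exp_add exp_of_nat_mult)
      then have "norm (h x) * norm (q x) ^ k = norm (sinh (a * of_real x) * sinh (b * of_real x)
          * exp (- ((v + 2 * of_nat k) * c * of_real x)))"
        by (metis norm_mult norm_power)
      moreover have "Re ((v + 2 * of_nat k) * c) - \<bar>Re a\<bar> - \<bar>Re b\<bar> = lam k"
        by (simp add: lam_def algebra_simps)
      ultimately show ?thesis
        using norm_sinh_sinh_exp_le[of x a b "(v + 2 * of_nat k) * c"] that by simp
    qed
    show "summable (\<lambda>k. norm (- v + 1 gchoose k) * (norm a * norm b * (x\<^sup>2 * exp (- (lam k * x)))))"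
      if "x \<in> {0<..}" for x
    proof -
      have "exp (- (lam k * x)) = exp (- (\<alpha> * x)) * exp (- 2 * Re c * x) ^ k" for k
        by (simp add: lam_eq algebra_simps flip: exp_add exp_of_nat_mult)
      moreover have "summable (\<lambda>k. norm (- v + 1 gchoose k) * exp (- 2 * Re c * x) ^ k)"
        using c that by (intro summable_norm_gchoose_mult_power) auto
      ultimately show ?thesis
        by (simp add: summable_mult algebra_simps)
    qed
    show "summable (\<lambda>k. norm (- v + 1 gchoose k) * (norm a * norm b * (2 / lam k ^ 3)))"
      using summable_mult[OF summable_norm_gchoose_div_cube[of \<alpha> "2 * Re c" "- v + 1"],
          of "2 * norm a * norm b"] \<alpha> c v
      by (simp add: lam_eq mult_ac)
    have eq: "norm (- v gchoose N) * (norm a * norm b * (2 / lam (Suc N) ^ 3))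
        = 2 * norm a * norm b * (norm (- v gchoose N) / (\<alpha> + 2 * Re c + 2 * Re c * real N) ^ 3)" for N
      by (simp add: lam_eq algebra_simps)
    have "(\<lambda>N. norm (- v gchoose N) / (\<alpha> + 2 * Re c + 2 * Re c * real N) ^ 3) \<longlonglongrightarrow> 0"
      using \<alpha> c v by (intro norm_gchoose_div_cube_tendsto_zero) auto
    then show "(\<lambda>N. norm (- v gchoose N) * (norm a * norm b * (2 / lam (Suc N) ^ 3))) \<longlonglongrightarrow> 0"
      unfolding eq by (rule tendsto_mult_right_zero)
    show "((\<lambda>x. norm a * norm b * (x\<^sup>2 * exp (- (lam k * x)))) has_integral
        norm a * norm b * (2 / lam k ^ 3)) {0<..}" for k
      by (intro has_integral_mult_right has_integral_square_exp_neg lam)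
    show "continuous_on {0<..} h" "continuous_on {0<..} q"
      unfolding h_def q_def by (intro continuous_intros)+
  qed (use \<delta> c in \<open>auto simp: q_def\<close>)
  then show ?thesis ..
qed

lemma sinh_sinh_div_cosh_pow_series:
  fixes v a b c :: complex
  assumes "Re v < 4" and c: "Re c > 0"
    and pos: "Re (v * c + a + b) > 0" "Re (v * c + a - b) > 0"
      "Re (v * c - a + b) > 0" "Re (v * c - a - b) > 0"
  defines "f \<equiv> \<lambda>x::real. sinh (a * of_real x) * sinh (b * of_real x) / cosh_pow v (c * of_real x)"
  shows "f integrable_on {0<..}"
    and "(\<lambda>k. 2 powr v * ((-v) gchoose k) * laplace_sinh_sinh a b ((v + 2 * of_nat k) * c))
           sums integral {0<..} f"
proof -
  define h where "h = (\<lambda>x::real. sinh (a * of_real x) * sinh (b * of_real x) * exp (- (v * c * of_real x)))"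
  define q where "q = (\<lambda>x::real. exp (- (2 * c * of_real x)))"
  obtain G \<gamma> \<delta> where "binomial_series_integrand {0<..} h q (-v) G \<gamma> \<delta>"
    using sinh_sinh_binomial_series_integrand[OF assms(1-6)] unfolding h_def q_def by blast
  then interpret binomial_series_integrand "{0<..}" h q "-v" G \<gamma> \<delta> .
  have integral_term: "integral {0<..} (\<lambda>x. h x * q x ^ k)
      = laplace_sinh_sinh a b ((v + 2 * of_nat k) * c)" for k
  proof -
    have "h x * q x ^ k = sinh (a * of_real x) * sinh (b * of_real x)
        * exp (- ((v + 2 * of_nat k) * c * of_real x))" for x
      by (simp add: h_def q_def algebra_simps flip: exp_add exp_of_nat_mult)
    then show ?thesis
      by (simp only:) (intro integral_unique has_integral_sinh_sinh_exp Re_shifted_points_pos c pos)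
  qed
  have f: "f = (\<lambda>x. 2 powr v * (h x * (1 + q x) powr (- v)))"
    using inverse_cosh_pow[of v "c * of_real x" for x]
    by (simp add: fun_eq_iff f_def h_def q_def divide_inverse mult_ac)
  show "f integrable_on {0<..}"
    unfolding f by (intro integrable_on_mult_right integrable_binomial_series)
  show "(\<lambda>k. 2 powr v * ((-v) gchoose k) * laplace_sinh_sinh a b ((v + 2 * of_nat k) * c))
      sums integral {0<..} f"
    using sums_mult[OF sums_integral_binomial_series, of "2 powr v"]
    unfolding f integral_mult_right by (simp add: integral_term mult.assoc)
qed

lemma pochhammer_mult_add_of_nat:
  fixes s :: "'a::comm_semiring_1"
  shows "pochhammer s n * (s + of_nat n) = s * pochhammer (1 + s) n"
  using pochhammer_rec[of s n] pochhammer_rec'[of s n] by (simp add: add.commute mult.commute)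

lemma pochhammer_div_pochhammer_one_plus:
  fixes s :: "'a::field_char_0"
  assumes "1 + s \<notin> \<int>\<^sub>\<le>\<^sub>0" "s \<noteq> 0"
  shows "pochhammer s n / pochhammer (1 + s) n = s / (s + of_nat n)"
proof -
  have "pochhammer (1 + s) n \<noteq> 0"
    using assms(1) pochhammer_eq_0_imp_nonpos_Int by blast
  moreover have "s + of_nat n \<noteq> 0"
    using pochhammer_mult_add_of_nat[of s n] assms(2) calculation by auto
  ultimately show ?thesis
    using pochhammer_mult_add_of_nat[of s n] by (simp add: field_simps)
qed

lemma pochhammer_one_plus_div_pochhammer:
  fixes s :: "'a::field_char_0"
  assumes "s \<notin> \<int>\<^sub>\<le>\<^sub>0"
  shows "pochhammer (1 + s) n / pochhammer s n = (s + of_nat n) / s"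
proof -
  have "pochhammer s n \<noteq> 0" "s \<noteq> 0"
    using assms pochhammer_eq_0_imp_nonpos_Int by auto
  then show ?thesis
    using pochhammer_mult_add_of_nat[of s n] by (simp add: field_simps)
qed

lemma prod_list_pochhammer_div_pochhammer_one_plus:
  fixes ss :: "'a::field_char_0 list"
  assumes "\<And>s. s \<in> set ss \<Longrightarrow> 1 + s \<notin> \<int>\<^sub>\<le>\<^sub>0 \<and> s \<noteq> 0"
  shows "(\<Prod>s\<leftarrow>ss. pochhammer s n) / (\<Prod>s\<leftarrow>ss. pochhammer (1 + s) n) = (\<Prod>s\<leftarrow>ss. s / (s + of_nat n))"
  using assms
proof (induction ss)
  case (Cons s ss)
  then show ?case
    by (simp add: times_divide_times_eq[symmetric] pochhammer_div_pochhammer_one_plus)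
qed simp

lemma very_well_poised_term:
  fixes v :: "'a::field_char_0" and ss :: "'a list"
  assumes "v / 2 \<notin> \<int>\<^sub>\<le>\<^sub>0" "\<And>s. s \<in> set ss \<Longrightarrow> 1 + s \<notin> \<int>\<^sub>\<le>\<^sub>0 \<and> s \<noteq> 0"
  shows "(\<Prod>x\<leftarrow>v # (1 + v / 2) # ss. pochhammer x n) / (\<Prod>x\<leftarrow>v / 2 # map ((+) 1) ss. pochhammer x n)
           * (-1) ^ n / of_nat (fact n)
         = ((-v) gchoose n) * ((v + 2 * of_nat n) / v) * (\<Prod>s\<leftarrow>ss. s / (s + of_nat n))"
proof -
  have "v \<noteq> 0" using assms(1) by auto
  have "(\<Prod>x\<leftarrow>v # (1 + v / 2) # ss. pochhammer x n) / (\<Prod>x\<leftarrow>v / 2 # map ((+) 1) ss. pochhammer x n)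
      = pochhammer v n * (pochhammer (1 + v / 2) n / pochhammer (v / 2) n)
          * ((\<Prod>s\<leftarrow>ss. pochhammer s n) / (\<Prod>s\<leftarrow>ss. pochhammer (1 + s) n))"
    by (simp add: o_def)
  also have "\<dots> = pochhammer v n * ((v / 2 + of_nat n) / (v / 2)) * (\<Prod>s\<leftarrow>ss. s / (s + of_nat n))"
    by (simp only: pochhammer_one_plus_div_pochhammer[OF assms(1)]
        prod_list_pochhammer_div_pochhammer_one_plus[OF assms(2)])
  also have "(v / 2 + of_nat n) / (v / 2) = (v + 2 * of_nat n) / v"
    using \<open>v \<noteq> 0\<close> by (simp add: field_simps)
  finally show ?thesis
    by (simp add: gbinomial_pochhammer mult_ac)
qed

lemma hypergeometric_term_eq_laplace_sinh_sinh:
  fixes v a b c :: complex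
  assumes c: "Re c > 0"
    and pos: "Re (v * c + a + b) > 0" "Re (v * c + a - b) > 0"
      "Re (v * c - a + b) > 0" "Re (v * c - a - b) > 0"
    and "v / 2 \<notin> \<int>\<^sub>\<le>\<^sub>0"
    and "1 + (v/2 - a/(2*c) - b/(2*c)) \<notin> \<int>\<^sub>\<le>\<^sub>0" "1 + (v/2 - a/(2*c) + b/(2*c)) \<notin> \<int>\<^sub>\<le>\<^sub>0"
      "1 + (v/2 + a/(2*c) + b/(2*c)) \<notin> \<int>\<^sub>\<le>\<^sub>0" "1 + (v/2 + a/(2*c) - b/(2*c)) \<notin> \<int>\<^sub>\<le>\<^sub>0"
  defines "s3 \<equiv> v/2 - a/(2*c) - b/(2*c)" and "s4 \<equiv> v/2 - a/(2*c) + b/(2*c)"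
    and "s5 \<equiv> v/2 + a/(2*c) + b/(2*c)" and "s6 \<equiv> v/2 + a/(2*c) - b/(2*c)"
    and "P \<equiv> (v * c - a - b) * (v * c + a + b) * (v * c - a + b) * (v * c + a - b)"
  shows "2 powr (v + 1) * v * a * b * c / P *
           ((\<Prod>x\<leftarrow>[v, 1 + v/2, s3, s5, s4, s6]. pochhammer x n)
             / (\<Prod>x\<leftarrow>[v/2, 1 + s3, 1 + s5, 1 + s4, 1 + s6]. pochhammer x n) * (-1) ^ n / of_nat (fact n))
         = 2 powr v * ((-v) gchoose n) * laplace_sinh_sinh a b ((v + 2 * of_nat n) * c)"
proof -
  define u where "u = (v + 2 * of_nat n) * c"
  note nonzero = pos[THEN nonzero_if_Re_pos] c[THEN nonzero_if_Re_pos]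
  have "v \<noteq> 0" using assms(6) by auto
  have s: "s3 = (v * c - a - b) / (2 * c)" "s5 = (v * c + a + b) / (2 * c)"
    "s4 = (v * c - a + b) / (2 * c)" "s6 = (v * c + a - b) / (2 * c)"
    using nonzero by (simp_all add: s3_def s4_def s5_def s6_def field_simps)
  have ratio: "e / (2 * c) / (e / (2 * c) + of_nat n) = e / (e + 2 * of_nat n * c)" for e
    using nonzero by (simp add: field_simps)
  have ratios: "s3 / (s3 + of_nat n) = (v * c - a - b) / (u - a - b)"
    "s5 / (s5 + of_nat n) = (v * c + a + b) / (u + a + b)"
    "s4 / (s4 + of_nat n) = (v * c - a + b) / (u - a + b)"
    "s6 / (s6 + of_nat n) = (v * c + a - b) / (u + a - b)"
    unfolding s ratio by (simp_all add: u_def algebra_simps)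
  have "1 + s \<notin> \<int>\<^sub>\<le>\<^sub>0 \<and> s \<noteq> 0" if "s \<in> set [s3, s5, s4, s6]" for s
    using that assms(7-10) nonzero by (auto simp: s simp flip: s3_def s4_def s5_def s6_def)
  from very_well_poised_term[of v "[s3, s5, s4, s6]" n, OF assms(6) this]
  have hyper: "(\<Prod>x\<leftarrow>[v, 1 + v/2, s3, s5, s4, s6]. pochhammer x n)
           / (\<Prod>x\<leftarrow>[v/2, 1 + s3, 1 + s5, 1 + s4, 1 + s6]. pochhammer x n) * (-1) ^ n / of_nat (fact n)
      = ((-v) gchoose n) * ((v + 2 * of_nat n) / v) * ((v * c - a - b) / (u - a - b))
          * ((v * c + a + b) / (u + a + b)) * ((v * c - a + b) / (u - a + b)) * ((v * c + a - b) / (u + a - b))"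
    by (simp add: ratios mult_ac)
  have "u - a - b \<noteq> 0" "u + a + b \<noteq> 0" "u - a + b \<noteq> 0" "u + a - b \<noteq> 0"
    using Re_shifted_points_pos[OF c pos, of n, THEN nonzero_if_Re_pos] by (simp_all flip: u_def)
  \<comment> \<open>with the eight linear factors as atoms, \<open>field_simps\<close> cancels them\<close>
  have "2 powr (v + 1) * v * a * b * c / (E1 * E2 * E3 * E4)
      * (g * ((v + 2 * of_nat n) / v) * (E1 / F1) * (E2 / F2) * (E3 / F3) * (E4 / F4))
      = 2 powr v * g * (2 * a * b * ((v + 2 * of_nat n) * c) / (F1 * F2 * F3 * F4))"
    if "E1 \<noteq> 0" "E2 \<noteq> 0" "E3 \<noteq> 0" "E4 \<noteq> 0" "F1 \<noteq> 0" "F2 \<noteq> 0" "F3 \<noteq> 0" "F4 \<noteq> 0"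
    for E1 E2 E3 E4 F1 F2 F3 F4 g :: complex
    using that \<open>v \<noteq> 0\<close> by (simp add: powr_add field_simps)
  from this[OF nonzero(4,1,3,2) \<open>u - a - b \<noteq> 0\<close> \<open>u + a + b \<noteq> 0\<close> \<open>u - a + b \<noteq> 0\<close> \<open>u + a - b \<noteq> 0\<close>]
  show ?thesis
    unfolding hyper P_def laplace_sinh_sinh_def u_def[symmetric] .
qed

lemma sums_cmult_imp_eq_mult_suminf:
  fixes C :: "'a::real_normed_field"
  assumes "(\<lambda>n. C * f n) sums I"
  shows "I = C * suminf f"
proof (cases "C = 0")
  case True
  then show ?thesis using assms sums_zero sums_unique2 by auto
next
  case False
  then have "suminf f = I / C"
    using sums_unique[OF sums_mult_D[OF assms False]] by simp
  with False show ?thesis by simp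
qed

theorem mainTheorem13:
  fixes v a b c :: complex
  assumes "Re v < 4" and "Re c > 0"
    and "Re (v * c + a + b) > 0" and "Re (v * c + a - b) > 0"
    and "Re (v * c - a + b) > 0" and "Re (v * c - a - b) > 0"
    and "v / 2 \<notin> \<int>\<^sub>\<le>\<^sub>0"
    and "1 + (v/2 - a/(2*c) - b/(2*c)) \<notin> \<int>\<^sub>\<le>\<^sub>0"
    and "1 + (v/2 - a/(2*c) + b/(2*c)) \<notin> \<int>\<^sub>\<le>\<^sub>0"
    and "1 + (v/2 + a/(2*c) + b/(2*c)) \<notin> \<int>\<^sub>\<le>\<^sub>0"
    and "1 + (v/2 + a/(2*c) - b/(2*c)) \<notin> \<int>\<^sub>\<le>\<^sub>0"
  shows "let s3 = v/2 - a/(2*c) - b/(2*c); s4 = v/2 - a/(2*c) + b/(2*c);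
             s5 = v/2 + a/(2*c) + b/(2*c); s6 = v/2 + a/(2*c) - b/(2*c);
             P = (v * c - a - b) * (v * c + a + b) * (v * c - a + b) * (v * c + a - b)
         in ((\<lambda>x::real. sinh (a * of_real x) * sinh (b * of_real x) / cosh_pow v (c * of_real x))
              has_integral
              (2 powr (v + 1) * v * a * b * c / P *
               hypergeom_pFq [v, 1 + v/2, s3, s5, s4, s6] [v/2, 1 + s3, 1 + s5, 1 + s4, 1 + s6] (-1)))
            {0<..}"
proof -
  note series = sinh_sinh_div_cosh_pow_series[OF assms(1-6)]
  note terms = hypergeometric_term_eq_laplace_sinh_sinh[OF assms(2-11)]
  from sums_cmult_imp_eq_mult_suminf[OF series(2)[folded terms]] series(1) show ?thesis
    by (simp add: Let_def hypergeom_pFq_def has_integral_integral)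
qed

end
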